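(* For real $c>4$, \[ Z(s,x+x^{-1}+y+y^{-1}+c) = c^s \sum_{j=0}^\infty \binom{s}{2j} \frac{1}{c^{2j}} \binom{2j}{j}^2 = c^s\, {}_3F_2\left(\left.\begin{array}{c} -\frac{s}{2}, \frac{1-s}{2}, \frac12 \\ 1,1 \end{array}\right| \frac{16}{c^2}\right). \]
   Context: For a nonzero Laurent polynomial $P\in\mathbb{C}[x_1^{\pm1},\dots,x_n^{\pm1}]$, the zeta Mahler measure is $Z(s,P)=\int_0^1\cdots\int_0^1 \left|P(\mathrm{e}^{2\pi i\theta_1},\dots,\mathrm{e}^{2\pi i\theta_n})\right|^s \,\mathrm{d}\theta_1\cdots\mathrm{d}\theta_n$. The generalized hypergeometric series is ${}_3F_2\left(\left.\begin{array}{c} a_1,a_2,a_3 \\ b_1,b_2 \end{array}\right| z\right)=\sum_{j=0}^\infty \frac{(a_1)_j(a_2)_j(a_3)_j}{(b_1)_j(b_2)_j\, j!}z^j$, with Pochhammer symbol $(a)_j=a(a+1)\cdots(a+j-1)$. *)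

theory Defs
  imports "HOL-Analysis.Analysis"
begin

definition zeta_mahler2 :: "complex \<Rightarrow> (complex \<Rightarrow> complex \<Rightarrow> complex) \<Rightarrow> complex" where
  "zeta_mahler2 s P =
     (LINT t : {0..1::real} \<times> {0..1::real} | lborel.
        complex_of_real (cmod (P (cis (2 * pi * fst t)) (cis (2 * pi * snd t)))) powr s)"

definition hyp3F2 :: "complex \<Rightarrow> complex \<Rightarrow> complex \<Rightarrow> complex \<Rightarrow> complex \<Rightarrow> complex \<Rightarrow> complex" where
  "hyp3F2 a1 a2 a3 b1 b2 z =
     (\<Sum>j. pochhammer a1 j * pochhammer a2 j * pochhammer a3 j
           / (pochhammer b1 j * pochhammer b2 j * of_nat (fact j)) * z ^ j)"

end

theory Submission
  imports Defs
begin

text \<open>On the torus the polynomial takes the real value \<open>c + U\<close> with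
\<open>U = 2 cos 2\<pi>\<theta>\<^sub>1 + 2 cos 2\<pi>\<theta>\<^sub>2 \<in> [-4, 4]\<close>. For \<open>c > 4\<close> the binomial series
\<open>|P|\<^sup>s = c\<^sup>s \<Sum>\<^sub>n (s choose n) (U/c)\<^sup>n\<close> is dominated by \<open>\<Sum>\<^sub>n |s choose n| (4/c)\<^sup>n\<close>,
so it may be integrated termwise. The \<open>n\<close>-th moment of \<open>U\<close> is the constant term of
\<open>(x + x\<inverse> + y + y\<inverse>)\<^sup>n\<close>, namely \<open>(n choose n/2)\<^sup>2\<close> for even \<open>n\<close> (a Vandermonde
convolution of the one-variable moments) and \<open>0\<close> for odd \<open>n\<close>. The duplication formulas
for factorials and Pochhammer symbols turn the surviving terms into those of the \<open>\<^sub>3F\<^sub>2\<close>.\<close>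

definition cos_moment :: "nat \<Rightarrow> nat" where
  "cos_moment m = (if even m then m choose (m div 2) else 0)"

definition cos_sum :: "real \<times> real \<Rightarrow> real" where
  "cos_sum t = 2 * cos (2 * pi * fst t) + 2 * cos (2 * pi * snd t)"

lemma has_integral_cis_int_multiple:
  fixes k :: int
  shows "((\<lambda>x. cis (2 * pi * of_int k * x)) has_integral (if k = 0 then 1 else 0)) {0..1}"
proof (cases "k = 0")
  case True
  then show ?thesis using has_integral_const_real[of "1::complex" 0 1] by simp
next
  case False
  define w where "w = \<i> * complex_of_real (2 * pi * of_int k)"
  have w0: "w \<noteq> 0" using False by (simp add: w_def)
  have cis_exp: "cis (2 * pi * of_int k * x) = exp (w * of_real x)" for x
    by (simp add: cis_conv_exp w_def mult_ac)
  have "((\<lambda>x. exp (w * of_real x) / w) has_vector_derivative exp (w * of_real x)) (at x within {0..1})"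
    for x
    by (rule has_vector_derivative_real_field, (rule derivative_eq_intros refl)+)
      (use w0 in \<open>simp_all add: field_simps\<close>)
  then have "((\<lambda>x. exp (w * of_real x)) has_integral
      (exp (w * of_real 1) / w - exp (w * of_real 0) / w)) {0..1}"
    by (intro fundamental_theorem_of_calculus) auto
  moreover have "exp w = 1"
    using cis_multiple_2pi[of "of_int k"] by (simp add: w_def cis_conv_exp)
  ultimately show ?thesis using False by (simp add: cis_exp)
qed

lemma two_cos_power_eq_sum_cis:
  "complex_of_real (2 * cos (2 * pi * x)) ^ m
     = (\<Sum>l\<le>m. of_nat (m choose l) * cis (2 * pi * of_int (int (2 * l) - int m) * x))"
proof -
  have "complex_of_real (2 * cos (2 * pi * x)) ^ m = (cis (2 * pi * x) + cis (- (2 * pi * x))) ^ m"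
    by (simp add: complex_eq_iff)
  also have "\<dots> = (\<Sum>l\<le>m. of_nat (m choose l) * cis (2 * pi * x) ^ l * cis (- (2 * pi * x)) ^ (m - l))"
    by (rule binomial_ring)
  also have "\<dots> = (\<Sum>l\<le>m. of_nat (m choose l) * cis (2 * pi * of_int (int (2 * l) - int m) * x))"
  proof (rule sum.cong[OF refl])
    fix l assume "l \<in> {..m}"
    have "cis (2 * pi * x) ^ l * cis (- (2 * pi * x)) ^ (m - l)
        = cis (real l * (2 * pi * x) + real (m - l) * (- (2 * pi * x)))"
      by (simp only: Complex.DeMoivre cis_mult)
    also have "real l * (2 * pi * x) + real (m - l) * (- (2 * pi * x))
        = 2 * pi * of_int (int (2 * l) - int m) * x"
      using \<open>l \<in> {..m}\<close> by (simp add: of_nat_diff algebra_simps)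
    finally show "of_nat (m choose l) * cis (2 * pi * x) ^ l * cis (- (2 * pi * x)) ^ (m - l)
        = of_nat (m choose l) * cis (2 * pi * of_int (int (2 * l) - int m) * x)"
      by (simp add: mult.assoc)
  qed
  finally show ?thesis .
qed

lemma has_integral_two_cos_power:
  "((\<lambda>x. complex_of_real (2 * cos (2 * pi * x)) ^ m) has_integral of_nat (cos_moment m)) {0..1}"
proof -
  have "((\<lambda>x. complex_of_real (2 * cos (2 * pi * x)) ^ m) has_integral
      (\<Sum>l\<le>m. of_nat (m choose l) * (if int (2 * l) - int m = 0 then 1 else 0))) {0..1}"
    unfolding two_cos_power_eq_sum_cis
    by (intro has_integral_sum has_integral_mult_right has_integral_cis_int_multiple) auto
  moreover have "(\<Sum>l\<le>m. of_nat (m choose l) * (if int (2 * l) - int m = 0 then 1 else 0) :: complex)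
      = (\<Sum>l\<le>m. if even m \<and> l = m div 2 then of_nat (m choose l) else 0)"
    by (intro sum.cong refl) (auto, presburger)
  moreover have "\<dots> = of_nat (cos_moment m)"
    by (cases "even m") (simp_all add: cos_moment_def)
  ultimately show ?thesis by simp
qed

lemma choose_even_central_product:
  assumes "i \<le> j"
  shows "(2 * j choose 2 * i) * (2 * i choose i) * (2 * (j - i) choose (j - i))
    = (2 * j choose j) * (j choose i) ^ 2"
proof -
  have central: "real (2 * k choose k) = fact (2 * k) / (fact k * fact k)" for k
    by (subst binomial_fact) (auto simp: mult_2)
  have even: "real (2 * j choose 2 * i) = fact (2 * j) / (fact (2 * i) * fact (2 * (j - i)))"
    using assms by (subst binomial_fact) (auto simp: right_diff_distrib')
  have odd: "real (j choose i) = fact j / (fact i * fact (j - i))"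
    using assms by (subst binomial_fact) auto
  have "real ((2 * j choose 2 * i) * (2 * i choose i) * (2 * (j - i) choose (j - i)))
      = real ((2 * j choose j) * (j choose i) ^ 2)"
    unfolding of_nat_mult of_nat_power central even odd by (simp add: field_simps power2_eq_square)
  then show ?thesis by (simp only: of_nat_eq_iff)
qed

lemma cos_moment_convolution:
  "(\<Sum>m\<le>n. (n choose m) * cos_moment m * cos_moment (n - m)) = cos_moment n ^ 2"
proof (cases "even n")
  case False
  then have "\<And>m. m \<le> n \<Longrightarrow> cos_moment m * cos_moment (n - m) = 0"
    unfolding cos_moment_def by auto
  then show ?thesis using False by (simp add: cos_moment_def)
next
  case True
  then obtain j where n: "n = 2 * j" by auto
  let ?h = "\<lambda>m. (n choose m) * cos_moment m * cos_moment (n - m)"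
  have "(\<Sum>m\<le>n. ?h m) = (\<Sum>m\<in>(\<lambda>i. 2 * i) ` {..j}. ?h m)"
    by (rule sum.mono_neutral_right) (auto simp: n cos_moment_def)
  also have "\<dots> = (\<Sum>i\<le>j. ?h (2 * i))"
    by (subst sum.reindex) (auto simp: inj_on_def)
  also have "\<dots> = (\<Sum>i\<le>j. (2 * j choose j) * (j choose i) ^ 2)"
  proof (rule sum.cong[OF refl])
    fix i assume "i \<in> {..j}"
    then have "i \<le> j" "n - 2 * i = 2 * (j - i)" using n by auto
    then show "?h (2 * i) = (2 * j choose j) * (j choose i) ^ 2"
      using choose_even_central_product n by (simp add: cos_moment_def)
  qed
  also have "\<dots> = (2 * j choose j) * (2 * j choose j)"
    by (simp add: sum_distrib_left[symmetric] choose_square_sum)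
  finally show ?thesis using n by (simp add: cos_moment_def power2_eq_square)
qed

lemma abs_cos_sum_le: "\<bar>cos_sum t\<bar> \<le> 4"
  using abs_cos_le_one[of "2 * pi * fst t"] abs_cos_le_one[of "2 * pi * snd t"]
  unfolding cos_sum_def by linarith

lemma continuous_on_cos_sum: "continuous_on A cos_sum"
  unfolding cos_sum_def by (intro continuous_intros)

lemma laurent_polynomial_on_torus:
  "cis (2 * pi * fst t) + inverse (cis (2 * pi * fst t))
     + cis (2 * pi * snd t) + inverse (cis (2 * pi * snd t)) + complex_of_real c
   = complex_of_real (c + cos_sum t)"
  by (simp add: complex_eq_iff cos_sum_def)

lemma set_integral_cos_sum_power:
  "(LINT t : {0..1::real} \<times> {0..1::real} | lborel. complex_of_real (cos_sum t) ^ n)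
     = of_nat (cos_moment n ^ 2)"
proof -
  let ?A = "\<lambda>x::real. complex_of_real (2 * cos (2 * pi * x))"
  let ?g = "\<lambda>t. complex_of_real (cos_sum t) ^ n"
  have cont: "continuous_on A ?g" for A
    by (intro continuous_intros continuous_on_cos_sum)
  have "set_integrable lborel ({0..1} \<times> {0..1}) ?g"
    unfolding set_integrable_def
    by (rule borel_integrable_compact) (auto intro: compact_Times cont)
  then have "(LINT t : {0..1} \<times> {0..1} | lborel. ?g t) = integral (cbox (0, 0) (1, 1)) ?g"
    by (simp add: set_borel_integral_eq_integral cbox_Pair_eq)
  also have "\<dots> = integral {0..1} (\<lambda>x. integral {0..1} (\<lambda>y. ?g (x, y)))"
    using integral_prod_continuous[OF cont] by simp
  also have "\<dots> = integral {0..1} (\<lambda>x. \<Sum>m\<le>n. of_nat (n choose m) * ?A x ^ m * of_nat (cos_moment (n - m)))"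
  proof (rule integral_cong)
    fix x
    have "((\<lambda>y. \<Sum>m\<le>n. of_nat (n choose m) * ?A x ^ m * ?A y ^ (n - m)) has_integral
        (\<Sum>m\<le>n. of_nat (n choose m) * ?A x ^ m * of_nat (cos_moment (n - m)))) {0..1}"
      by (intro has_integral_sum has_integral_mult_right has_integral_two_cos_power) auto
    then show "integral {0..1} (\<lambda>y. ?g (x, y))
        = (\<Sum>m\<le>n. of_nat (n choose m) * ?A x ^ m * of_nat (cos_moment (n - m)))"
      by (simp add: integral_unique cos_sum_def binomial_ring)
  qed
  also have "\<dots> = (\<Sum>m\<le>n. of_nat (n choose m) * of_nat (cos_moment m) * of_nat (cos_moment (n - m)))"
    by (intro integral_unique has_integral_sum has_integral_mult_right has_integral_mult_left
        has_integral_two_cos_power) auto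
  also have "\<dots> = of_nat (cos_moment n ^ 2)"
    by (simp flip: cos_moment_convolution)
  finally show ?thesis .
qed

lemma summable_norm_gchoose_power:
  fixes s :: complex and r :: real
  assumes "0 \<le> r" "r < 1"
  shows "summable (\<lambda>n. norm (s gchoose n) * r ^ n)"
proof -
  have "ereal (norm (complex_of_real r)) < conv_radius (\<lambda>n. s gchoose n)"
    using assms by (simp add: conv_radius_gchoose one_ereal_def)
  from abs_summable_in_conv_radius[OF this] show ?thesis
    using assms by (simp add: norm_mult norm_power)
qed

lemma gchoose_series_powr:
  fixes s :: complex and c u :: real
  assumes "\<bar>u\<bar> < c"
  shows "(\<lambda>n. complex_of_real c powr s * ((s gchoose n) * (1 / complex_of_real c ^ n)
            * complex_of_real u ^ n)) sums complex_of_real (c + u) powr s"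
proof -
  have "c > 0" using assms by linarith
  then have "complex_of_real c powr (s - of_nat n) = complex_of_real c powr s / complex_of_real c ^ n"
    for n
    by (simp add: powr_diff powr_nat')
  with gen_binomial_complex''[of u c s] assms show ?thesis
    by (simp add: field_simps)
qed

lemma set_integral_sums:
  fixes f :: "nat \<Rightarrow> 'a \<Rightarrow> 'b::{banach, second_countable_topology}"
  assumes S: "S \<in> sets M" "emeasure M S < \<infinity>"
    and integrable: "\<And>n. set_integrable M S (f n)"
    and bound: "\<And>n x. x \<in> S \<Longrightarrow> norm (f n x) \<le> B n"
    and summable: "summable B"
  shows "(\<lambda>n. LINT x:S|M. f n x) sums (LINT x:S|M. (\<Sum>n. f n x))"
proof -
  let ?g = "\<lambda>n x. indicator S x *\<^sub>R f n x"
  have norm_g: "norm (?g n x) \<le> indicator S x * B n" for n x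
    using bound by (simp split: split_indicator)
  have integrable_g: "integrable M (?g n)" for n
    using integrable by (simp add: set_integrable_def)
  have "(\<integral>x. norm (?g n x) \<partial>M) \<le> (\<integral>x. indicator S x * B n \<partial>M)" for n
    using S by (intro integral_mono integrable_norm integrable_g norm_g integrable_mult_left) auto
  then have integral_norm_g: "(\<integral>x. norm (?g n x) \<partial>M) \<le> measure M S * B n" for n
    using S by (simp add: Int_absorb2 sets.sets_into_space)
  have "(\<lambda>n. integral\<^sup>L M (?g n)) sums (\<integral>x. (\<Sum>n. ?g n x) \<partial>M)"
  proof (rule sums_integral)
    show "AE x in M. summable (\<lambda>n. norm (?g n x))"
    proof (intro AE_I2)
      fix x show "summable (\<lambda>n. norm (?g n x))"
      proof (cases "x \<in> S")
        case True
        then show ?thesis using bound by (intro summable_comparison_test'[OF summable]) auto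
      qed simp
    qed
    show "summable (\<lambda>n. \<integral>x. norm (?g n x) \<partial>M)"
      using integral_norm_g by (intro summable_comparison_test'[OF summable_mult[OF summable]]) auto
  qed (rule integrable_g)
  moreover have "(\<Sum>n. ?g n x) = indicator S x *\<^sub>R (\<Sum>n. f n x)" for x
    by (simp split: split_indicator)
  ultimately show ?thesis by (simp add: set_lebesgue_integral_def)
qed

lemma zeta_mahler2_sums_moments:
  fixes c :: real and s :: complex
  assumes "4 < c"
  shows "(\<lambda>n. complex_of_real c powr s * ((s gchoose n) * (1 / complex_of_real c ^ n)
            * of_nat (cos_moment n ^ 2)))
         sums zeta_mahler2 s (\<lambda>x y. x + inverse x + y + inverse y + complex_of_real c)"
proof -
  define S where "S = {0..1::real} \<times> {0..1::real}"
  define C where "C = complex_of_real c powr s"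
  define f where "f n t = C * ((s gchoose n) * (1 / complex_of_real c ^ n)
      * complex_of_real (cos_sum t) ^ n)" for n t
  have "compact S" unfolding S_def by (intro compact_Times compact_Icc)
  have "(\<lambda>n. LINT t:S|lborel. f n t) sums (LINT t:S|lborel. (\<Sum>n. f n t))"
  proof (rule set_integral_sums)
    show "S \<in> sets lborel"
      using \<open>compact S\<close> by (simp add: borel_compact)
    show "emeasure lborel S < \<infinity>"
      using \<open>compact S\<close> by (rule emeasure_compact_finite)
    show "set_integrable lborel S (f n)" for n
      unfolding set_integrable_def f_def using \<open>compact S\<close>
      by (intro borel_integrable_compact continuous_intros continuous_on_cos_sum)
    show "norm (f n t) \<le> norm C * (norm (s gchoose n) * (4 / c) ^ n)" for n t
    proof -
      have "(\<bar>cos_sum t\<bar> / c) ^ n \<le> (4 / c) ^ n"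
        using abs_cos_sum_le[of t] assms by (intro power_mono divide_right_mono) auto
      then have "norm C * (norm (s gchoose n) * (\<bar>cos_sum t\<bar> / c) ^ n)
          \<le> norm C * (norm (s gchoose n) * (4 / c) ^ n)"
        by (intro mult_left_mono) auto
      then show ?thesis using assms
        by (simp add: f_def norm_mult norm_power norm_divide power_divide)
    qed
    show "summable (\<lambda>n. norm C * (norm (s gchoose n) * (4 / c) ^ n))"
      using assms by (intro summable_mult summable_norm_gchoose_power) auto
  qed
  moreover have "(LINT t:S|lborel. f n t)
      = C * ((s gchoose n) * (1 / complex_of_real c ^ n) * of_nat (cos_moment n ^ 2))" for n
    by (simp add: f_def S_def set_integral_cos_sum_power)
  moreover have "(\<Sum>n. f n t) = complex_of_real (cmod (complex_of_real (c + cos_sum t))) powr s" for t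
  proof -
    have "\<bar>cos_sum t\<bar> < c" using abs_cos_sum_le[of t] assms by linarith
    moreover from this have "cmod (complex_of_real (c + cos_sum t)) = c + cos_sum t"
      by (simp only: norm_of_real)
    ultimately show ?thesis
      using sums_unique[OF gchoose_series_powr[of "cos_sum t" c s]] by (simp add: f_def C_def)
  qed
  ultimately show ?thesis
    unfolding zeta_mahler2_def laurent_polynomial_on_torus by (simp add: S_def C_def)
qed

lemma gchoose_even_term_eq_hypergeometric_term:
  fixes c :: real and s :: complex
  assumes "c \<noteq> 0"
  shows "(s gchoose (2 * j)) * (1 / complex_of_real c ^ (2 * j)) * of_nat ((2 * j choose j) ^ 2)
    = pochhammer (- s / 2) j * pochhammer ((1 - s) / 2) j * pochhammer (1 / 2) j
      / (pochhammer 1 j * pochhammer 1 j * of_nat (fact j)) * complex_of_real (16 / c ^ 2) ^ j"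
proof -
  have "pochhammer (- s) (2 * j) = of_nat (2 ^ (2 * j)) * pochhammer (- s / 2) j * pochhammer ((1 - s) / 2) j"
    using pochhammer_double[of "- s / 2" j] by (simp add: field_simps)
  then have gchoose: "s gchoose (2 * j)
      = 2 ^ (2 * j) * pochhammer (- s / 2) j * pochhammer ((1 - s) / 2) j / fact (2 * j)"
    by (simp add: gbinomial_pochhammer)
  have central: "(of_nat ((2 * j choose j) ^ 2) :: complex) = (fact (2 * j) / (fact j * fact j)) ^ 2"
    unfolding of_nat_power by (subst binomial_fact) (auto simp: mult_2)
  have power: "complex_of_real (16 / c ^ 2) ^ j = 2 ^ (2 * j) * 2 ^ (2 * j) / complex_of_real c ^ (2 * j)"
    by (simp add: power_divide power_mult flip: power_mult_distrib)
  show ?thesis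
    unfolding gchoose central power pochhammer_fact[symmetric] fact_double
    using assms by (simp add: field_simps power2_eq_square)
qed

theorem theorem14:
  fixes c :: real and s :: complex
  assumes "c > 4"
  shows "summable (\<lambda>j. (s gchoose (2*j)) * (1 / complex_of_real c ^ (2*j)) * of_nat ((2*j choose j)^2))
    \<and> zeta_mahler2 s (\<lambda>x y. x + inverse x + y + inverse y + complex_of_real c)
        = complex_of_real c powr s *
          (\<Sum>j. (s gchoose (2*j)) * (1 / complex_of_real c ^ (2*j)) * of_nat ((2*j choose j)^2))
    \<and> complex_of_real c powr s *
          (\<Sum>j. (s gchoose (2*j)) * (1 / complex_of_real c ^ (2*j)) * of_nat ((2*j choose j)^2))
        = complex_of_real c powr s * hyp3F2 (- s / 2) ((1 - s) / 2) (1/2) 1 1 (complex_of_real (16 / c^2))"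
proof -
  define Z where "Z = zeta_mahler2 s (\<lambda>x y. x + inverse x + y + inverse y + complex_of_real c)"
  define C where "C = complex_of_real c powr s"
  define a where "a n = (s gchoose n) * (1 / complex_of_real c ^ n) * of_nat (cos_moment n ^ 2)" for n
  have "C \<noteq> 0" using assms by (simp add: C_def)
  have "a sums (Z / C)"
    using sums_mult_D[OF zeta_mahler2_sums_moments[of c s, OF assms, folded C_def Z_def a_def] \<open>C \<noteq> 0\<close>] .
  moreover have "a n = 0" if "n \<notin> range (\<lambda>j. 2 * j)" for n
    using that by (auto simp: a_def cos_moment_def elim!: evenE)
  ultimately have even_sums: "(\<lambda>j. a (2 * j)) sums (Z / C)"
    using sums_mono_reindex[of "\<lambda>j. 2 * j" a] by (simp add: strict_mono_def)
  have even_term: "a (2 * j) = (s gchoose (2*j)) * (1 / complex_of_real c ^ (2*j)) * of_nat ((2*j choose j)^2)"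
    for j by (simp add: a_def cos_moment_def)
  have "hyp3F2 (- s / 2) ((1 - s) / 2) (1/2) 1 1 (complex_of_real (16 / c^2)) = (\<Sum>j. a (2 * j))"
    unfolding hyp3F2_def even_term using assms
    by (intro suminf_cong gchoose_even_term_eq_hypergeometric_term[symmetric]) simp
  then show ?thesis
    using even_sums even_term \<open>C \<noteq> 0\<close> by (simp add: Z_def C_def sums_iff)
qed

end
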